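(* Let $n\in\mathbb{N}$, $n\geq 1$. For each $k\in\{0,1,2,\ldots,n^2\}$ there exists a polyanalytic polynomial of degree $n$ with exactly $k$ distinct zeros, and there exists a polyanalytic polynomial of degree $n$ with infinitely many zeros.
   Context: A polyanalytic polynomial is a function $\mathbb{C}\to\mathbb{C}$ of the form $P(z,\bar z)=\sum_{j+k\le n}\alpha_{j,k} z^j \bar z^{k}$ with complex coefficients (a polynomial in $z$ and $\bar z$). Its degree is the largest $j+k$ with $\alpha_{j,k}\neq 0$. A zero of $P$ is a point $z\in\mathbb{C}$ with $P(z,\bar z)=0$. *)

theory Defs
  imports "HOL-Analysis.Analysis"
begin

text \<open>A polyanalytic polynomial is represented by its coefficient function
  a :: nat \<Rightarrow> nat \<Rightarrow> complex, where a j k is the coefficient of z^j (conj z)^k.\<close>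

definition polyan_support :: "(nat \<Rightarrow> nat \<Rightarrow> complex) \<Rightarrow> (nat \<times> nat) set" where
  "polyan_support a = {(j,k). a j k \<noteq> 0}"

definition is_polyan_coeffs :: "(nat \<Rightarrow> nat \<Rightarrow> complex) \<Rightarrow> bool" where
  "is_polyan_coeffs a \<longleftrightarrow> finite (polyan_support a)"

definition polyan_eval :: "(nat \<Rightarrow> nat \<Rightarrow> complex) \<Rightarrow> complex \<Rightarrow> complex" where
  "polyan_eval a z = (\<Sum>(j,k)\<in>polyan_support a. a j k * z ^ j * (cnj z) ^ k)"

definition polyan_degree :: "(nat \<Rightarrow> nat \<Rightarrow> complex) \<Rightarrow> nat" where
  "polyan_degree a = Max (insert 0 ((\<lambda>(j,k). j + k) ` polyan_support a))"

definition polyan_zeros :: "(nat \<Rightarrow> nat \<Rightarrow> complex) \<Rightarrow> complex set" where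
  "polyan_zeros a = {z. polyan_eval a z = 0}"

end

theory Submission
  imports Defs
begin

(* Writing z = x + iy, take F = beta * prod_t (x - t) + i * prod_j (y - c_j x - d_j) with
   real parameters. Its zeros are the points where both products vanish, i.e. where one of
   the vertical lines x = t meets one of the n lines y = c_j x + d_j. With at most n vertical
   lines F has degree at most n; along the imaginary axis |F(is)| >= prod_j |s - d_j| grows
   like s^n, whereas a polyanalytic polynomial of degree m is O(|z|^m), so the degree is
   exactly n. For the lines x = 0, ..., q and y = j x + min j r (1 <= r <= n), the column
   x = 0 carries r zeros and every other column n, giving r + q n zeros, which covers
   1, ..., n^2. The choices beta = 1 without vertical lines and beta = 0 give no zeros and
   the whole line y = 1 respectively. *)

definition exps_deg_le :: "nat \<Rightarrow> (nat \<times> nat) set" where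
  "exps_deg_le d = {(j, k). j + k \<le> d}"

lemma finite_exps_deg_le: "finite (exps_deg_le d)"
  by (rule finite_subset[of _ "{..d} \<times> {..d}"]) (auto simp: exps_deg_le_def)

lemma exps_deg_le_mono: "d \<le> e \<Longrightarrow> exps_deg_le d \<subseteq> exps_deg_le e"
  by (auto simp: exps_deg_le_def)

definition polyan_fun_deg_le :: "nat \<Rightarrow> (complex \<Rightarrow> complex) \<Rightarrow> bool" where
  "polyan_fun_deg_le d F \<longleftrightarrow>
     (\<exists>c. \<forall>z. F z = (\<Sum>(j, k)\<in>exps_deg_le d. c j k * z ^ j * cnj z ^ k))"

lemma polyan_fun_deg_le_mono:
  assumes "polyan_fun_deg_le d F" "d \<le> e"
  shows "polyan_fun_deg_le e F"
proof -
  obtain c where c: "\<And>z. F z = (\<Sum>(j, k)\<in>exps_deg_le d. c j k * z ^ j * cnj z ^ k)"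
    using assms(1) unfolding polyan_fun_deg_le_def by blast
  define c' where "c' j k = (if j + k \<le> d then c j k else 0)" for j k
  have "F z = (\<Sum>(j, k)\<in>exps_deg_le e. c' j k * z ^ j * cnj z ^ k)" for z
  proof -
    have "(\<Sum>(j, k)\<in>exps_deg_le e. c' j k * z ^ j * cnj z ^ k)
        = (\<Sum>(j, k)\<in>exps_deg_le d. c' j k * z ^ j * cnj z ^ k)"
      by (rule sum.mono_neutral_right[OF finite_exps_deg_le exps_deg_le_mono[OF assms(2)]])
        (auto simp: exps_deg_le_def c'_def split: if_splits)
    also have "\<dots> = F z"
      unfolding c by (rule sum.cong) (auto simp: exps_deg_le_def c'_def)
    finally show ?thesis by simp
  qed
  then show ?thesis unfolding polyan_fun_deg_le_def by blast
qed

lemma polyan_fun_deg_le_add: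
  assumes "polyan_fun_deg_le d F" "polyan_fun_deg_le d G"
  shows "polyan_fun_deg_le d (\<lambda>z. F z + G z)"
proof -
  obtain c where c: "\<And>z. F z = (\<Sum>(j, k)\<in>exps_deg_le d. c j k * z ^ j * cnj z ^ k)"
    using assms(1) unfolding polyan_fun_deg_le_def by blast
  obtain c' where c': "\<And>z. G z = (\<Sum>(j, k)\<in>exps_deg_le d. c' j k * z ^ j * cnj z ^ k)"
    using assms(2) unfolding polyan_fun_deg_le_def by blast
  have "F z + G z = (\<Sum>(j, k)\<in>exps_deg_le d. (c j k + c' j k) * z ^ j * cnj z ^ k)" for z
    unfolding c c' sum.distrib[symmetric] by (rule sum.cong) (auto simp: algebra_simps)
  then show ?thesis
    unfolding polyan_fun_deg_le_def by (intro exI[of _ "\<lambda>j k. c j k + c' j k"]) blast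
qed

lemma polyan_fun_deg_le_const: "polyan_fun_deg_le 0 (\<lambda>z. a)"
  unfolding polyan_fun_deg_le_def exps_deg_le_def by (auto intro: exI[of _ "\<lambda>_ _. a"])

lemma polyan_fun_deg_le_id: "polyan_fun_deg_le 1 (\<lambda>z. z)"
proof -
  have "exps_deg_le 1 = {(0, 0), (1, 0), (0, 1)}" by (auto simp: exps_deg_le_def)
  then show ?thesis unfolding polyan_fun_deg_le_def
    by (intro exI[of _ "\<lambda>j k. if (j, k) = (1, 0) then 1 else 0"]) simp
qed

lemma polyan_fun_deg_le_cnj: "polyan_fun_deg_le 1 cnj"
proof -
  have "exps_deg_le 1 = {(0, 0), (1, 0), (0, 1)}" by (auto simp: exps_deg_le_def)
  then show ?thesis unfolding polyan_fun_deg_le_def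
    by (intro exI[of _ "\<lambda>j k. if (j, k) = (0, 1) then 1 else 0"]) simp
qed

lemma polyan_fun_deg_le_mult:
  assumes "polyan_fun_deg_le d F" "polyan_fun_deg_le e G"
  shows "polyan_fun_deg_le (d + e) (\<lambda>z. F z * G z)"
proof -
  obtain c where c: "\<And>z. F z = (\<Sum>(j, k)\<in>exps_deg_le d. c j k * z ^ j * cnj z ^ k)"
    using assms(1) unfolding polyan_fun_deg_le_def by blast
  obtain c' where c': "\<And>z. G z = (\<Sum>(j, k)\<in>exps_deg_le e. c' j k * z ^ j * cnj z ^ k)"
    using assms(2) unfolding polyan_fun_deg_le_def by blast
  define S where "S = exps_deg_le d \<times> exps_deg_le e"
  define exps :: "(nat \<times> nat) \<times> nat \<times> nat \<Rightarrow> nat \<times> nat"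
    where "exps = (\<lambda>((j, k), (j', k')). (j + j', k + k'))"
  define w :: "(nat \<times> nat) \<times> nat \<times> nat \<Rightarrow> complex"
    where "w = (\<lambda>((j, k), (j', k')). c j k * c' j' k')"
  define c'' where "c'' j k = (\<Sum>pq\<in>{pq\<in>S. exps pq = (j, k)}. w pq)" for j k
  have exps_S: "exps ` S \<subseteq> exps_deg_le (d + e)"
    by (auto simp: S_def exps_def exps_deg_le_def)
  have "F z * G z = (\<Sum>(j, k)\<in>exps_deg_le (d + e). c'' j k * z ^ j * cnj z ^ k)" for z
  proof -
    have "F z * G z = (\<Sum>pq\<in>S. w pq * z ^ fst (exps pq) * cnj z ^ snd (exps pq))"
      unfolding c c' sum_product S_def sum.cartesian_product
      by (rule sum.cong) (auto simp: w_def exps_def power_add algebra_simps)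
    also have "\<dots> = (\<Sum>r\<in>exps_deg_le (d + e).
        \<Sum>pq\<in>{pq\<in>S. exps pq = r}. w pq * z ^ fst (exps pq) * cnj z ^ snd (exps pq))"
      by (rule sum.group[symmetric, OF _ finite_exps_deg_le exps_S])
        (simp add: S_def finite_exps_deg_le)
    also have "\<dots> = (\<Sum>(j, k)\<in>exps_deg_le (d + e). c'' j k * z ^ j * cnj z ^ k)"
      by (rule sum.cong) (auto simp: c''_def sum_distrib_right intro!: sum.cong)
    finally show ?thesis .
  qed
  then show ?thesis unfolding polyan_fun_deg_le_def by blast
qed

lemma polyan_fun_deg_le_scale:
  "polyan_fun_deg_le d F \<Longrightarrow> polyan_fun_deg_le d (\<lambda>z. a * F z)"
  using polyan_fun_deg_le_mult[OF polyan_fun_deg_le_const] by simp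

lemma polyan_fun_deg_le_diff:
  assumes "polyan_fun_deg_le d F" "polyan_fun_deg_le d G"
  shows "polyan_fun_deg_le d (\<lambda>z. F z - G z)"
  using polyan_fun_deg_le_add[OF assms(1) polyan_fun_deg_le_scale[OF assms(2), of "-1"]] by simp

lemma polyan_fun_deg_le_prod:
  assumes "finite I" "\<And>i. i \<in> I \<Longrightarrow> polyan_fun_deg_le 1 (f i)"
  shows "polyan_fun_deg_le (card I) (\<lambda>z. \<Prod>i\<in>I. f i z)"
  using assms
proof (induction I rule: finite_induct)
  case empty
  then show ?case using polyan_fun_deg_le_const by simp
next
  case (insert i I)
  then show ?case using polyan_fun_deg_le_mult[of 1 "f i" "card I"] by simp
qed

lemma polyan_fun_deg_le_Re: "polyan_fun_deg_le 1 (\<lambda>z. of_real (Re z))"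
proof -
  have "of_real (Re z) = (1 / 2) * (z + cnj z)" for z
    by (simp add: complex_add_cnj)
  then show ?thesis
    using polyan_fun_deg_le_scale[OF
        polyan_fun_deg_le_add[OF polyan_fun_deg_le_id polyan_fun_deg_le_cnj]]
    by presburger
qed

lemma polyan_fun_deg_le_Im: "polyan_fun_deg_le 1 (\<lambda>z. of_real (Im z))"
proof -
  have "of_real (Im z) = (- \<i> / 2) * (z - cnj z)" for z
    by (simp add: complex_eq_iff)
  then show ?thesis
    using polyan_fun_deg_le_scale[OF
        polyan_fun_deg_le_diff[OF polyan_fun_deg_le_id polyan_fun_deg_le_cnj]]
    by presburger
qed

lemma polyan_fun_deg_le_coeffs:
  assumes "polyan_fun_deg_le d F"
  obtains a where "is_polyan_coeffs a" "polyan_degree a \<le> d" "polyan_eval a = F"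
proof -
  obtain c where c: "\<And>z. F z = (\<Sum>(j, k)\<in>exps_deg_le d. c j k * z ^ j * cnj z ^ k)"
    using assms unfolding polyan_fun_deg_le_def by blast
  define a where "a j k = (if j + k \<le> d then c j k else 0)" for j k
  have supp: "polyan_support a \<subseteq> exps_deg_le d"
    by (auto simp: polyan_support_def exps_deg_le_def a_def split: if_splits)
  then have fin: "is_polyan_coeffs a"
    unfolding is_polyan_coeffs_def using finite_exps_deg_le by (rule finite_subset)
  have "polyan_degree a \<le> d"
    unfolding polyan_degree_def using fin supp
    by (subst Max_le_iff) (auto simp: is_polyan_coeffs_def exps_deg_le_def)
  moreover have "polyan_eval a z = F z" for z
  proof -
    have "polyan_eval a z = (\<Sum>(j, k)\<in>exps_deg_le d. a j k * z ^ j * cnj z ^ k)"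
      unfolding polyan_eval_def
      by (rule sum.mono_neutral_left[OF finite_exps_deg_le supp]) (auto simp: polyan_support_def)
    also have "\<dots> = F z"
      unfolding c by (rule sum.cong) (auto simp: a_def exps_deg_le_def)
    finally show ?thesis .
  qed
  ultimately show ?thesis using that fin by blast
qed

lemma norm_polyan_eval_le:
  assumes "is_polyan_coeffs a" "polyan_degree a \<le> m"
  shows "norm (polyan_eval a z)
    \<le> (\<Sum>(j, k)\<in>polyan_support a. norm (a j k)) * (1 + norm z) ^ m"
proof -
  have fin: "finite (polyan_support a)"
    using assms(1) by (simp add: is_polyan_coeffs_def)
  have deg: "j + k \<le> m" if "(j, k) \<in> polyan_support a" for j k
  proof -
    have "j + k \<le> polyan_degree a"
      unfolding polyan_degree_def using fin that by (intro Max_ge) force+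
    then show ?thesis using assms(2) by simp
  qed
  have "norm (a j k * z ^ j * cnj z ^ k) \<le> norm (a j k) * (1 + norm z) ^ m"
    if "(j, k) \<in> polyan_support a" for j k
  proof -
    have "norm (a j k * z ^ j * cnj z ^ k) = norm (a j k) * norm z ^ (j + k)"
      by (simp add: norm_mult norm_power power_add)
    also have "\<dots> \<le> norm (a j k) * (1 + norm z) ^ (j + k)"
      by (intro mult_left_mono power_mono) auto
    also have "\<dots> \<le> norm (a j k) * (1 + norm z) ^ m"
      by (intro mult_left_mono power_increasing deg[OF that]) auto
    finally show ?thesis .
  qed
  then have "norm (polyan_eval a z)
      \<le> (\<Sum>(j, k)\<in>polyan_support a. norm (a j k) * (1 + norm z) ^ m)"
    unfolding polyan_eval_def by (intro order.trans[OF norm_sum] sum_mono) auto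
  then show ?thesis by (simp add: sum_distrib_right case_prod_unfold)
qed

lemma exists_pow_diff_gt:
  fixes C r :: real
  assumes "C \<ge> 0" "r \<ge> 0"
  shows "\<exists>s\<ge>r. C * (1 + s) ^ m < (s - r) ^ Suc m"
proof (intro exI conjI)
  define s where "s = 2 * r + 1 + 2 * C * 4 ^ m"
  have s: "s \<ge> 1" "s / 2 \<le> s - r" "C * 4 ^ m < s / 2"
    using assms by (auto simp: s_def)
  have "C * (1 + s) ^ m \<le> C * (4 * (s / 2)) ^ m"
    using assms(1) s by (intro mult_left_mono power_mono) auto
  also have "\<dots> = (C * 4 ^ m) * (s / 2) ^ m"
    by (simp only: power_mult_distrib mult.assoc)
  also have "\<dots> < (s / 2) * (s / 2) ^ m"
    using s by (intro mult_strict_right_mono) auto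
  also have "\<dots> \<le> (s - r) ^ Suc m"
    using s by (simp only: power_Suc[symmetric]) (intro power_mono; simp)
  finally show "C * (1 + s) ^ m < (s - r) ^ Suc m" .
  show "s \<ge> r" using assms by (simp add: s_def)
qed

lemma polyan_degree_ge_of_growth:
  assumes "is_polyan_coeffs a" "r \<ge> 0"
    and "\<And>s. s \<ge> r \<Longrightarrow> (s - r) ^ n \<le> norm (polyan_eval a (\<i> * of_real s))"
  shows "n \<le> polyan_degree a"
proof (rule ccontr)
  assume "\<not> n \<le> polyan_degree a"
  then obtain m where n: "n = Suc m" and deg: "polyan_degree a \<le> m"
    by (cases n) auto
  define C where "C = (\<Sum>(j, k)\<in>polyan_support a. norm (a j k))"
  have "C \<ge> 0" unfolding C_def by (auto intro: sum_nonneg)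
  then obtain s where s: "s \<ge> r" "C * (1 + s) ^ m < (s - r) ^ n"
    using exists_pow_diff_gt assms(2) n by blast
  have "(s - r) ^ n \<le> C * (1 + norm (\<i> * of_real s)) ^ m"
    using assms(3)[OF s(1)] norm_polyan_eval_le[OF assms(1) deg]
    unfolding C_def by (rule order.trans)
  also have "norm (\<i> * of_real s) = s"
    using s(1) assms(2) by (simp add: norm_mult)
  finally show False using s(2) by simp
qed

lemma polyan_fun_deg_le_Complex_prods:
  fixes T :: "real set" and J :: "'a set" and \<beta> :: real and c d :: "'a \<Rightarrow> real"
  assumes "finite T" "finite J" "card T \<le> card J"
  shows "polyan_fun_deg_le (card J)
    (\<lambda>z. Complex (\<beta> * (\<Prod>t\<in>T. Re z - t)) (\<Prod>j\<in>J. Im z - c j * Re z - d j))"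
proof -
  have "polyan_fun_deg_le (0 + card T)
      (\<lambda>z. of_real \<beta> * (\<Prod>t\<in>T. of_real (Re z) - of_real t))"
    by (intro polyan_fun_deg_le_mult polyan_fun_deg_le_const polyan_fun_deg_le_prod assms(1)
        polyan_fun_deg_le_diff polyan_fun_deg_le_Re
        polyan_fun_deg_le_mono[OF polyan_fun_deg_le_const]) auto
  moreover have "polyan_fun_deg_le (0 + card J)
      (\<lambda>z. \<i> * (\<Prod>j\<in>J. of_real (Im z) - of_real (c j) * of_real (Re z) - of_real (d j)))"
    by (intro polyan_fun_deg_le_mult polyan_fun_deg_le_const polyan_fun_deg_le_prod assms(2)
        polyan_fun_deg_le_diff polyan_fun_deg_le_Im polyan_fun_deg_le_scale[OF polyan_fun_deg_le_Re]
        polyan_fun_deg_le_mono[OF polyan_fun_deg_le_const]) auto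
  ultimately show ?thesis
    unfolding Complex_eq using polyan_fun_deg_le_add polyan_fun_deg_le_mono assms(3) by simp
qed

lemma polyan_exists_zeros_lines:
  fixes T :: "real set" and J :: "'a set" and \<beta> :: real and c d :: "'a \<Rightarrow> real"
  assumes "finite T" "finite J" "card T \<le> card J"
  obtains a where "is_polyan_coeffs a" "polyan_degree a = card J"
    "polyan_zeros a =
      {z. \<beta> * (\<Prod>t\<in>T. Re z - t) = 0 \<and> (\<Prod>j\<in>J. Im z - c j * Re z - d j) = 0}"
proof -
  define F where
    "F z = Complex (\<beta> * (\<Prod>t\<in>T. Re z - t)) (\<Prod>j\<in>J. Im z - c j * Re z - d j)" for z
  obtain a where a: "is_polyan_coeffs a" "polyan_degree a \<le> card J" "polyan_eval a = F"
    using polyan_fun_deg_le_coeffs[OF polyan_fun_deg_le_Complex_prods[OF assms]]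
    unfolding F_def[abs_def] by blast
  define D where "D = (\<Sum>j\<in>J. \<bar>d j\<bar>)"
  have "(s - D) ^ card J \<le> norm (polyan_eval a (\<i> * of_real s))" if "s \<ge> D" for s
  proof -
    have "(s - D) ^ card J = (\<Prod>j\<in>J. s - D)" by simp
    also have "\<dots> \<le> (\<Prod>j\<in>J. \<bar>s - d j\<bar>)"
    proof (rule prod_mono)
      fix j assume "j \<in> J"
      then have "\<bar>d j\<bar> \<le> D"
        unfolding D_def using assms(2) by (intro member_le_sum) auto
      then show "0 \<le> s - D \<and> s - D \<le> \<bar>s - d j\<bar>" using that by linarith
    qed
    also have "\<dots> = \<bar>Im (F (\<i> * of_real s))\<bar>" by (simp add: F_def abs_prod)
    also have "\<dots> \<le> norm (polyan_eval a (\<i> * of_real s))" using a(3) abs_Im_le_cmod by simp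
    finally show ?thesis .
  qed
  moreover have "D \<ge> 0" unfolding D_def by (auto intro: sum_nonneg)
  ultimately have "card J \<le> polyan_degree a"
    using polyan_degree_ge_of_growth[OF a(1)] by blast
  moreover have "polyan_zeros a =
      {z. \<beta> * (\<Prod>t\<in>T. Re z - t) = 0 \<and> (\<Prod>j\<in>J. Im z - c j * Re z - d j) = 0}"
    unfolding polyan_zeros_def a(3)
    by (simp only: F_def complex_eq_iff complex.sel zero_complex.sel)
  ultimately show ?thesis using that a(1,2) by simp
qed

lemma card_image_staircase:
  fixes n r t :: nat
  assumes "1 \<le> r" "r \<le> n"
  shows "card ((\<lambda>j. j * t + min j r) ` {1..n}) = (if t = 0 then r else n)"
proof (cases "t = 0")
  case True
  have "(\<lambda>j. min j r) ` {1..n} = {1..r}"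
    using assms by (force intro: image_eqI[of _ _ "min _ r"])
  then show ?thesis using True by simp
next
  case False
  have "strict_mono_on {1..n} (\<lambda>j. j * t + min j r)"
    using False by (intro strict_mono_onI add_less_le_mono) auto
  then show ?thesis using False by (simp add: card_image strict_mono_on_imp_inj_on)
qed

lemma card_staircase_points:
  fixes n q r :: nat
  assumes "1 \<le> r" "r \<le> n"
  shows "card {z. Re z \<in> real ` {0..q} \<and> (\<exists>j\<in>{1..n}. Im z = real j * Re z + real (min j r))}
    = r + q * n"
proof -
  define column where
    "column t = (\<lambda>m. Complex (real t) (real m)) ` (\<lambda>j. j * t + min j r) ` {1..n}" for t :: nat
  have card_column: "card (column t) = (if t = 0 then r else n)" for t
  proof -
    have "card (column t) = card ((\<lambda>j. j * t + min j r) ` {1..n})"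
      unfolding column_def by (rule card_image) (auto simp: inj_on_def)
    then show ?thesis using card_image_staircase[OF assms] by simp
  qed
  have "{z. Re z \<in> real ` {0..q} \<and> (\<exists>j\<in>{1..n}. Im z = real j * Re z + real (min j r))}
      = (\<Union>t\<in>{0..q}. column t)"
  proof (intro set_eqI iffI)
    fix z
    assume "z \<in> {z. Re z \<in> real ` {0..q} \<and> (\<exists>j\<in>{1..n}. Im z = real j * Re z + real (min j r))}"
    then obtain t j where "t \<in> {0..q}" "j \<in> {1..n}"
      "z = Complex (real t) (real (j * t + min j r))"
      by (auto simp: complex_eq_iff)
    then show "z \<in> (\<Union>t\<in>{0..q}. column t)"
      unfolding column_def image_image by blast
  qed (auto simp: column_def)
  also have "card \<dots> = (\<Sum>t\<in>{0..q}. card (column t))"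
    by (rule card_UN_disjoint) (auto simp: column_def)
  also have "\<dots> = r + q * n"
    unfolding card_column by (induction q) auto
  finally show ?thesis .
qed

lemma polyan_exists_card_zeros:
  fixes n k :: nat
  assumes "1 \<le> k" "k \<le> n\<^sup>2"
  obtains a where "is_polyan_coeffs a" "polyan_degree a = n"
    "finite (polyan_zeros a)" "card (polyan_zeros a) = k"
proof -
  define q where "q = (k - 1) div n"
  define r where "r = (k - 1) mod n + 1"
  have "n > 0" using assms by (cases n) auto
  then have r: "1 \<le> r" "r \<le> n" by (auto simp: r_def Suc_le_eq)
  have k: "k = r + q * n"
    using assms(1) div_mult_mod_eq[of "k - 1" n] by (simp add: q_def r_def)
  have "k - 1 < n * n" using assms by (simp add: power2_eq_square)
  then have "q < n" unfolding q_def by (simp add: less_mult_imp_div_less)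
  then have "card (real ` {0..q}) \<le> card {1..n}" by (simp add: card_image)
  from polyan_exists_zeros_lines[OF finite_imageI finite_atLeastAtMost this,
      where \<beta> = 1 and c = "\<lambda>j. real j" and d = "\<lambda>j. real (min j r)"]
  obtain a where a: "is_polyan_coeffs a" "polyan_degree a = card {1..n}"
    "polyan_zeros a = {z. 1 * (\<Prod>t\<in>real ` {0..q}. Re z - t) = 0
      \<and> (\<Prod>j\<in>{1..n}. Im z - real j * Re z - real (min j r)) = 0}"
    by blast
  have "polyan_zeros a
      = {z. Re z \<in> real ` {0..q} \<and> (\<exists>j\<in>{1..n}. Im z = real j * Re z + real (min j r))}"
    unfolding a(3) by (simp add: diff_eq_eq add.commute)
  then have "card (polyan_zeros a) = k"
    using card_staircase_points[OF r] k by simp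
  moreover have "finite (polyan_zeros a)"
    using \<open>card (polyan_zeros a) = k\<close> assms(1) by (intro card_ge_0_finite) simp
  ultimately show ?thesis using that a(1,2) by simp
qed

lemma polyan_exists_no_zeros:
  obtains a where "is_polyan_coeffs a" "polyan_degree a = n" "polyan_zeros a = {}"
proof -
  have "card ({} :: real set) \<le> card {1..n}" by simp
  from polyan_exists_zeros_lines[OF finite.emptyI finite_atLeastAtMost this,
      where \<beta> = 1 and c = "\<lambda>_. 0" and d = "\<lambda>_. 0"]
  obtain a where "is_polyan_coeffs a" "polyan_degree a = card {1..n}"
    "polyan_zeros a = {z. 1 * (\<Prod>t\<in>{}. Re z - t) = 0
      \<and> (\<Prod>j\<in>{1..n}. Im z - 0 * Re z - 0) = 0}"
    by blast
  then show ?thesis using that by simp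
qed

lemma polyan_exists_infinite_zeros:
  assumes "n \<ge> 1"
  obtains a where "is_polyan_coeffs a" "polyan_degree a = n" "infinite (polyan_zeros a)"
proof -
  have "card ({} :: real set) \<le> card {1..n}" by simp
  from polyan_exists_zeros_lines[OF finite.emptyI finite_atLeastAtMost this,
      where \<beta> = 0 and c = "\<lambda>_. 0" and d = "\<lambda>_. 1"]
  obtain a where a: "is_polyan_coeffs a" "polyan_degree a = card {1..n}"
    "polyan_zeros a = {z. 0 * (\<Prod>t\<in>{}. Re z - t) = 0
      \<and> (\<Prod>j\<in>{1..n}. Im z - 0 * Re z - 1) = 0}"
    by blast
  have "range (\<lambda>x. Complex x 1) \<subseteq> polyan_zeros a"
    unfolding a(3) using assms by auto
  moreover have "infinite (range (\<lambda>x. Complex x 1))"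
    using finite_imageD[of "\<lambda>x. Complex x 1" UNIV] infinite_UNIV_char_0
    by (auto simp: inj_on_def)
  ultimately have "infinite (polyan_zeros a)" using finite_subset by blast
  then show ?thesis using that a(1,2) by simp
qed

theorem theorem2p16:
  fixes n :: nat
  assumes "n \<ge> 1"
  shows "(\<forall>k \<le> n^2. \<exists>a. is_polyan_coeffs a \<and> polyan_degree a = n \<and>
              finite (polyan_zeros a) \<and> card (polyan_zeros a) = k)
         \<and> (\<exists>a. is_polyan_coeffs a \<and> polyan_degree a = n \<and> infinite (polyan_zeros a))"
proof (intro conjI allI impI)
  fix k :: nat assume k: "k \<le> n^2"
  show "\<exists>a. is_polyan_coeffs a \<and> polyan_degree a = n \<and>
      finite (polyan_zeros a) \<and> card (polyan_zeros a) = k"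
  proof (cases "k = 0")
    case True
    obtain a where "is_polyan_coeffs a" "polyan_degree a = n" "polyan_zeros a = {}"
      by (rule polyan_exists_no_zeros)
    then show ?thesis using True by auto
  next
    case False
    then have "1 \<le> k" by simp
    from polyan_exists_card_zeros[OF this k] show ?thesis by blast
  qed
next
  from polyan_exists_infinite_zeros[OF assms]
  show "\<exists>a. is_polyan_coeffs a \<and> polyan_degree a = n \<and> infinite (polyan_zeros a)" by blast
qed

end
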